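(* Let $T$ be a string of length $n$ over an alphabet $\Sigma$ of size $\sigma\ge 2$. For any $1\le i\le j<n$, $|\mathsf{MUS}(T[i..j+1])\bigtriangleup\mathsf{MUS}(T[i..j])|\le 4$ and $-1\le|\mathsf{MUS}(T[i..j+1])|-|\mathsf{MUS}(T[i..j])|\le 2$. Furthermore, these bounds are tight: for any $\sigma\ge 3$ and any $i,j$ with $1\le i\le j<n$ and $j-i+1\ge 5$, there exist strings $T$ over an alphabet of size $\sigma$ attaining $|\mathsf{MUS}(T[i..j+1])\bigtriangleup\mathsf{MUS}(T[i..j])|=4$, strings attaining $|\mathsf{MUS}(T[i..j+1])|-|\mathsf{MUS}(T[i..j])|=2$, and strings attaining $|\mathsf{MUS}(T[i..j+1])|-|\mathsf{MUS}(T[i..j])|=-1$.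
   Context: $T[a..b]$ denotes the substring of $T$ from position $a$ to $b$. For a string $S$ and a string $w$, $\#\mathit{occ}_S(w)$ is the number of positions at which $w$ occurs in $S$; by convention $\#\mathit{occ}_S(\varepsilon)=|S|+1$. A substring $w$ of $S$ is unique in $S$ if $\#\mathit{occ}_S(w)=1$ and repeating in $S$ if $\#\mathit{occ}_S(w)\ge 2$. For $1\le i\le j\le n$, $\mathsf{MUS}(T[i..j])$ is the set of intervals $[s,t]$ (positions in $T$) with $i\le s\le t\le j$ such that $T[s..t]$ is unique in $T[i..j]$ and every proper substring of $T[s..t]$ (including the empty string) is repeating in $T[i..j]$. $\bigtriangleup$ denotes symmetric difference. *)

theory Defs
  imports Main "HOL-Library.Sublist"
begin

text \<open>Strings are lists; positions are 1-based as in the paper.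
  substr T a b is T[a..b] (for 1 <= a <= b <= |T|).\<close>
definition substr :: "'a list \<Rightarrow> nat \<Rightarrow> nat \<Rightarrow> 'a list" where
  "substr T a b = take (Suc b - a) (drop (a - 1) T)"

text \<open>Number of occurrences of w in S; by convention |S|+1 for the empty string.\<close>
definition occ :: "'a list \<Rightarrow> 'a list \<Rightarrow> nat" where
  "occ S w = (if w = [] then length S + 1
              else card {p. p + length w \<le> length S \<and> take (length w) (drop p S) = w})"

definition MUS :: "'a list \<Rightarrow> nat \<Rightarrow> nat \<Rightarrow> (nat \<times> nat) set" where
  "MUS T i j = {(s, t). i \<le> s \<and> s \<le> t \<and> t \<le> j
       \<and> occ (substr T i j) (substr T s t) = 1
       \<and> (\<forall>w. sublist w (substr T s t) \<and> w \<noteq> substr T s t \<longrightarrow> occ (substr T i j) w \<ge> 2)}"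

definition symdiff :: "'b set \<Rightarrow> 'b set \<Rightarrow> 'b set" where
  "symdiff A B = (A - B) \<union> (B - A)"

end

(*
  A MUS of S
  is lost exactly when its string is a suffix of S c; two lost MUSs would be nested suffixes
  of one another, contradicting minimality, so at most one is lost. A new MUS either ends
  at the new last position, which at most one MUS can do, or it ends inside S: then its
  string is unique in S, and dropping its first or its last character leaves a suffix of
  S c that occurs exactly once in S. The occurrences in S of all such suffixes end at one
  common position e, so the new MUS ends at e or e + 1, and ending at e forces the
  shortest such suffix to be a lost MUS. Hence at most three MUSs are gained, and at most
  two when none is lost, which gives both bounds for S = T[i..j] and c = T[j+1].
  The extensions a^k b c c by b and a a b^k a by a attain them.
*)

theory Submission
  imports Defs
begin

section \<open>Occurrences and substrings\<close>

(* Start positions are 0-based, unlike the 1-based intervals of substr and MUS. *)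
definition occs :: "'a list \<Rightarrow> 'a list \<Rightarrow> nat set" where
  "occs S w = {p. p + length w \<le> length S \<and> take (length w) (drop p S) = w}"

lemma occs_subset_atMost: "occs S w \<subseteq> {..length S}"
  unfolding occs_def by auto

lemma finite_occs [simp]: "finite (occs S w)"
  using occs_subset_atMost finite_subset by blast

lemma occ_eq_card_occs: "occ S w = card (occs S w)"
proof (cases "w = []")
  case True
  then have "occs S w = {..length S}"
    unfolding occs_def by auto
  with True show ?thesis
    unfolding occ_def by simp
qed (simp add: occ_def occs_def)

lemma occ_Nil: "occ S [] = Suc (length S)"
  by (simp add: occ_def)

lemma occ_eq_1_iff: "occ S w = 1 \<longleftrightarrow> (\<exists>p. occs S w = {p})"
  by (simp add: occ_eq_card_occs card_1_singleton_iff)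

lemma one_le_occ: "p \<in> occs S w \<Longrightarrow> 1 \<le> occ S w"
  unfolding occ_eq_card_occs using card_0_eq[OF finite_occs] by fastforce

lemma two_le_occ: "p \<in> occs S w \<Longrightarrow> q \<in> occs S w \<Longrightarrow> p \<noteq> q \<Longrightarrow> 2 \<le> occ S w"
  unfolding occ_eq_card_occs
  by (metis card_2_iff card_mono empty_subsetI finite_occs insert_subset)

lemma occs_nth:
  "p \<in> occs S w \<longleftrightarrow> p + length w \<le> length S \<and> (\<forall>r < length w. S ! (p + r) = w ! r)"
  unfolding occs_def by (auto intro!: nth_equalityI) (metis add_leD1 nth_drop nth_take order_trans)

lemma occs_snoc:
  "occs (S @ [c]) w = occs S w \<union> (if suffix w (S @ [c]) then {Suc (length S) - length w} else {})"
proof (intro set_eqI iffI)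
  fix p assume p: "p \<in> occs (S @ [c]) w"
  show "p \<in> occs S w \<union> (if suffix w (S @ [c]) then {Suc (length S) - length w} else {})"
  proof (cases "p + length w \<le> length S")
    case True
    with p show ?thesis
      unfolding occs_def by auto
  next
    case False
    with p have "p + length w = Suc (length S)" "drop p (S @ [c]) = w"
      unfolding occs_def by auto
    then show ?thesis
      by (metis Un_iff add_diff_cancel_right' insertI1 suffix_drop)
  qed
next
  fix p assume p: "p \<in> occs S w \<union> (if suffix w (S @ [c]) then {Suc (length S) - length w} else {})"
  show "p \<in> occs (S @ [c]) w"
  proof (cases "p \<in> occs S w")
    case True
    then show ?thesis
      unfolding occs_def by auto
  next
    case False
    with p obtain zs where zs: "S @ [c] = zs @ w" and "p = Suc (length S) - length w"
      by (auto simp: suffix_def split: if_splits)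
    then have "p = length zs"
      by (metis add_diff_cancel_right' length_append length_append_singleton)
    with zs show ?thesis
      unfolding occs_def by simp
  qed
qed

lemma occ_snoc: "occ (S @ [c]) w = occ S w + (if suffix w (S @ [c]) then 1 else 0)"
proof -
  have "Suc (length S) - length w \<notin> occs S w"
    unfolding occs_def by auto
  then show ?thesis
    unfolding occ_eq_card_occs occs_snoc by auto
qed

lemma occ_le_occ_snoc: "occ S w \<le> occ (S @ [c]) w"
  by (simp add: occ_snoc)

lemma occs_sublist: "p \<in> occs S (x @ w @ y) \<Longrightarrow> p + length x \<in> occs S w"
  unfolding occs_nth by (auto simp: nth_append add.assoc dest: spec[where x = "length x + _"])

lemma occ_sublist_le: "sublist w v \<Longrightarrow> occ S v \<le> occ S w"
proof -
  assume "sublist w v"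
  then obtain x y where v: "v = x @ w @ y"
    unfolding sublist_def by blast
  show ?thesis
  proof (cases "w = []")
    case True
    have "occ S v \<le> card {..length S}"
      unfolding occ_eq_card_occs by (intro card_mono occs_subset_atMost) simp
    with True show ?thesis
      by (simp add: occ_Nil)
  next
    case False
    have "inj_on (\<lambda>p. p + length x) (occs S v)"
      by (simp add: inj_on_def)
    moreover have "(\<lambda>p. p + length x) ` occs S v \<subseteq> occs S w"
      using occs_sublist v by blast
    ultimately show ?thesis
      unfolding occ_eq_card_occs by (meson card_inj_on_le finite_occs)
  qed
qed

lemma occs_singleton: "p \<in> occs S [x] \<longleftrightarrow> p < length S \<and> S ! p = x"
  by (simp add: occs_nth Suc_le_eq)

lemma occs_pair: "p \<in> occs S [x, y] \<longleftrightarrow> Suc p < length S \<and> S ! p = x \<and> S ! Suc p = y"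
  by (auto simp: occs_nth less_Suc_eq)

lemma occ_eq_1I: "p \<in> occs S w \<Longrightarrow> (\<And>q. q \<in> occs S w \<Longrightarrow> q = p) \<Longrightarrow> occ S w = 1"
  using occ_eq_1_iff by blast

lemma length_substr: "1 \<le> s \<Longrightarrow> t \<le> length S \<Longrightarrow> length (substr S s t) = Suc t - s"
  unfolding substr_def by simp

lemma substr_whole: "substr S 1 (length S) = S"
  unfolding substr_def by simp

lemma substr_append: "1 \<le> s \<Longrightarrow> t \<le> length S \<Longrightarrow> substr (S @ X) s t = substr S s t"
  unfolding substr_def by simp

lemma substr_snoc:
  "1 \<le> s \<Longrightarrow> s \<le> Suc t \<Longrightarrow> t < length S \<Longrightarrow> substr S s (Suc t) = substr S s t @ [S ! t]"
  unfolding substr_def by (simp add: Suc_diff_le take_Suc_conv_app_nth)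

lemma substr_substr:
  "1 \<le> s \<Longrightarrow> s \<le> a \<Longrightarrow> b \<le> t \<Longrightarrow> substr (substr S s t) (a + 1 - s) (b + 1 - s) = substr S a b"
  unfolding substr_def by (cases "s \<le> Suc b") (simp_all add: drop_take min_def)

lemma sublist_substr: "sublist (substr S a b) S"
  unfolding substr_def by (meson sublist_drop sublist_take sublist_order.order_trans)

lemma tl_substr: "1 \<le> s \<Longrightarrow> tl (substr S s t) = substr S (Suc s) t"
  unfolding substr_def by (simp add: tl_take tl_drop flip: drop_Suc)

lemma butlast_substr: "1 \<le> s \<Longrightarrow> t \<le> length S \<Longrightarrow> butlast (substr S s t) = substr S s (t - 1)"
  unfolding substr_def by (cases t) (simp_all add: butlast_take)

lemma substr_in_occs: "1 \<le> s \<Longrightarrow> s \<le> t \<Longrightarrow> t \<le> length S \<Longrightarrow> s - 1 \<in> occs S (substr S s t)"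
  unfolding occs_def substr_def by auto

lemma substr_at_occs: "p \<in> occs S w \<Longrightarrow> substr S (Suc p) (p + length w) = w"
  unfolding occs_def substr_def by auto

lemma occ_substr_le:
  "1 \<le> s \<Longrightarrow> s \<le> a \<Longrightarrow> b \<le> t \<Longrightarrow> occ S (substr S s t) \<le> occ S (substr S a b)"
  by (metis occ_sublist_le sublist_substr substr_substr)

lemma proper_sublist_cases:
  "sublist w v \<Longrightarrow> w \<noteq> v \<Longrightarrow> sublist w (tl v) \<or> sublist w (butlast v)"
proof -
  assume "sublist w v" "w \<noteq> v"
  then obtain x y where v: "v = x @ w @ y"
    unfolding sublist_def by auto
  show ?thesis
  proof (cases x)
    case (Cons _ x')
    then have "tl v = x' @ w @ y"
      using v by simp
    then show ?thesis
      by auto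
  next
    case Nil
    then have "butlast v = w @ butlast y"
      using v \<open>w \<noteq> v\<close> by (simp add: butlast_append)
    then show ?thesis
      by auto
  qed
qed

section \<open>Minimal unique substrings of a whole string\<close>

definition mus :: "'a list \<Rightarrow> (nat \<times> nat) set" where
  "mus S = MUS S 1 (length S)"

lemma mem_mus_iff:
  "(s, t) \<in> mus S \<longleftrightarrow> 1 \<le> s \<and> s \<le> t \<and> t \<le> length S \<and> occ S (substr S s t) = 1
     \<and> 2 \<le> occ S (tl (substr S s t)) \<and> 2 \<le> occ S (butlast (substr S s t))"
proof -
  have "(\<forall>w. sublist w u \<and> w \<noteq> u \<longrightarrow> 2 \<le> occ S w) \<longleftrightarrow> 2 \<le> occ S (tl u) \<and> 2 \<le> occ S (butlast u)"
    if "u \<noteq> []" for u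
  proof
    assume "\<forall>w. sublist w u \<and> w \<noteq> u \<longrightarrow> 2 \<le> occ S w"
    moreover have "tl u \<noteq> u" "butlast u \<noteq> u"
      using \<open>u \<noteq> []\<close> by (metis length_tl length_butlast diff_less length_greater_0_conv zero_less_one less_irrefl)+
    ultimately show "2 \<le> occ S (tl u) \<and> 2 \<le> occ S (butlast u)"
      by simp
  next
    assume "2 \<le> occ S (tl u) \<and> 2 \<le> occ S (butlast u)"
    then show "\<forall>w. sublist w u \<and> w \<noteq> u \<longrightarrow> 2 \<le> occ S w"
      using proper_sublist_cases occ_sublist_le order_trans by blast
  qed
  moreover have "substr S s t \<noteq> []" if "1 \<le> s" "s \<le> t" "t \<le> length S"
    using length_substr[of s t S] that by auto
  ultimately show ?thesis
    unfolding mus_def MUS_def substr_whole by auto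
qed

lemma finite_mus: "finite (mus S)"
  by (rule finite_subset[of _ "{..length S} \<times> {..length S}"]) (auto simp: mem_mus_iff)

lemma mus_nested_eq:
  assumes "(s, t) \<in> mus S" "s \<le> a" "b \<le> t" "occ S (substr S a b) = 1"
  shows "a = s \<and> b = t"
proof -
  have st: "1 \<le> s" "t \<le> length S" "2 \<le> occ S (substr S (Suc s) t)" "2 \<le> occ S (substr S s (t - 1))"
    using assms(1) by (auto simp: mem_mus_iff tl_substr butlast_substr)
  have "\<not> s < a"
  proof
    assume "s < a"
    then have "occ S (substr S (Suc s) t) \<le> occ S (substr S a b)"
      using occ_substr_le[of "Suc s" a b t S] assms(3) by simp
    with st assms(4) show False
      by simp
  qed
  moreover have "\<not> b < t"
  proof
    assume "b < t"
    then have "occ S (substr S s (t - 1)) \<le> occ S (substr S a b)"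
      using occ_substr_le[of s a b "t - 1" S] st assms(2) by simp
    with st assms(4) show False
      by simp
  qed
  ultimately show ?thesis
    using assms(2,3) by linarith
qed

lemma mus_end_inj: "(s, t) \<in> mus S \<Longrightarrow> (s', t) \<in> mus S \<Longrightarrow> s = s'"
  by (metis mem_mus_iff mus_nested_eq nle_le order_refl)

lemma mus_substr_inj:
  assumes "(s, t) \<in> mus S" "(s', t') \<in> mus S" "substr S s t = substr S s' t'"
  shows "s = s' \<and> t = t'"
proof -
  have st: "1 \<le> s" "s \<le> t" "t \<le> length S" "1 \<le> s'" "s' \<le> t'" "t' \<le> length S"
    and "occ S (substr S s t) = 1"
    using assms(1,2) by (auto simp: mem_mus_iff)
  then obtain p where "occs S (substr S s t) = {p}"
    by (metis occ_eq_1_iff)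
  then have "s - 1 = s' - 1"
    using substr_in_occs[of s t S] substr_in_occs[of s' t' S] st assms(3) by auto
  moreover have "Suc t - s = Suc t' - s'"
    using arg_cong[OF assms(3), of length] st by (simp add: length_substr)
  ultimately show ?thesis
    using st by linarith
qed

lemma card_mus_ends_le: "finite F \<Longrightarrow> card {x \<in> mus S. snd x \<in> F} \<le> card F"
  by (rule card_inj_on_le[of snd]) (auto simp: inj_on_def intro: mus_end_inj)

section \<open>Appending a character\<close>

lemma mus_suffix_eq:
  assumes "(s, t) \<in> mus S" "(s', t') \<in> mus S" "suffix (substr S s t) (substr S s' t')"
  shows "s = s' \<and> t = t'"
proof (rule mus_substr_inj[OF assms(1,2)], rule ccontr)
  assume ne: "substr S s t \<noteq> substr S s' t'"
  obtain z where z: "substr S s' t' = z @ substr S s t"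
    using assms(3) by (auto simp: suffix_def)
  with ne have "sublist (substr S s t) (tl (substr S s' t'))"
    by (cases z) auto
  then have "occ S (tl (substr S s' t')) \<le> occ S (substr S s t)"
    by (rule occ_sublist_le)
  then show False
    using assms(1,2) by (simp add: mem_mus_iff)
qed

lemma mus_snoc_removed_iff:
  "(s, t) \<in> mus S - mus (S @ [c]) \<longleftrightarrow> (s, t) \<in> mus S \<and> suffix (substr S s t) (S @ [c])"
proof (cases "(s, t) \<in> mus S")
  case True
  then have "substr (S @ [c]) s t = substr S s t"
    by (simp add: mem_mus_iff substr_append)
  with True show ?thesis
    by (auto simp: mem_mus_iff occ_snoc)
qed simp

lemma card_mus_snoc_removed: "card (mus S - mus (S @ [c])) \<le> 1"
proof -
  have "(s, t) = (s', t')"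
    if "(s, t) \<in> mus S - mus (S @ [c])" "(s', t') \<in> mus S - mus (S @ [c])" for s t s' t'
  proof -
    from that have mus: "(s, t) \<in> mus S" "(s', t') \<in> mus S"
      and "suffix (substr S s t) (S @ [c])" "suffix (substr S s' t') (S @ [c])"
      unfolding mus_snoc_removed_iff by simp_all
    then consider "suffix (substr S s t) (substr S s' t')" | "suffix (substr S s' t') (substr S s t)"
      using suffix_same_cases by blast
    then show ?thesis
    proof cases
      case 1
      then show ?thesis
        using mus_suffix_eq[OF mus] by simp
    next
      case 2
      then show ?thesis
        using mus_suffix_eq[OF mus(2,1)] by simp
    qed
  qed
  then have "card (mus S - mus (S @ [c])) \<le> Suc 0"
    unfolding card_le_Suc0_iff_eq[OF finite_Diff[OF finite_mus]] by fast
  then show ?thesis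
    by simp
qed

(* The 1-based end positions in S of the suffixes of S @ [c] that become repeating. *)
definition snoc_repeat_ends :: "'a list \<Rightarrow> 'a \<Rightarrow> nat set" where
  "snoc_repeat_ends S c = {p + length w | p w. suffix w (S @ [c]) \<and> occs S w = {p}}"

lemma finite_snoc_repeat_ends: "finite (snoc_repeat_ends S c)"
proof (rule finite_subset)
  show "snoc_repeat_ends S c \<subseteq> {..length S}"
  proof
    fix e assume "e \<in> snoc_repeat_ends S c"
    then obtain p w where "e = p + length w" "p \<in> occs S w"
      unfolding snoc_repeat_ends_def by auto
    then show "e \<in> {..length S}"
      unfolding occs_def by simp
  qed
qed simp

lemma card_snoc_repeat_ends: "card (snoc_repeat_ends S c) \<le> 1"
proof -
  have same_end: "p + length w = p' + length w'"
    if suffix: "suffix w w'" and occs: "occs S w = {p}" "occs S w' = {p'}" for w w' p p'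
  proof -
    obtain x where x: "w' = x @ w"
      using suffix by (auto simp: suffix_def)
    then have "p' + length x \<in> occs S w"
      using occs_sublist[of p' S x w "[]"] occs(2) by simp
    with x occs(1) show ?thesis
      by simp
  qed
  have "e = e'" if ends: "e \<in> snoc_repeat_ends S c" "e' \<in> snoc_repeat_ends S c" for e e'
  proof -
    obtain p w p' w' where "e = p + length w" "e' = p' + length w'"
      and "suffix w (S @ [c])" "suffix w' (S @ [c])" "occs S w = {p}" "occs S w' = {p'}"
      using ends unfolding snoc_repeat_ends_def by blast
    then show ?thesis
      using suffix_same_cases[of w "S @ [c]" w'] same_end by metis
  qed
  then show ?thesis
    by (simp add: card_le_Suc0_iff_eq[OF finite_snoc_repeat_ends])
qed

lemma mem_snoc_repeat_ends:
  assumes "1 \<le> a" "a \<le> b" "b \<le> length S"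
    and "suffix (substr S a b) (S @ [c])" "occ S (substr S a b) = 1"
  shows "b \<in> snoc_repeat_ends S c"
proof -
  obtain p where p: "occs S (substr S a b) = {p}"
    using assms(5) occ_eq_1_iff by metis
  then have "p = a - 1"
    using substr_in_occs[OF assms(1-3)] by simp
  then have "b = p + length (substr S a b)"
    using assms(1-3) by (simp add: length_substr)
  with p assms(4) show ?thesis
    unfolding snoc_repeat_ends_def by blast
qed

lemma mus_snoc_added_cases:
  assumes "S \<noteq> []" "(s, t) \<in> mus (S @ [c]) - mus S" "t \<le> length S"
  shows "Suc s \<le> t \<and> suffix (substr S (Suc s) t) (S @ [c]) \<and> occ S (substr S (Suc s) t) = 1
       \<or> Suc s \<le> t \<and> suffix (substr S s (t - 1)) (S @ [c]) \<and> occ S (substr S s (t - 1)) = 1"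
proof -
  define u where "u = substr S s t"
  have st: "1 \<le> s" "s \<le> t"
    using assms(2) by (simp_all add: mem_mus_iff)
  have "substr (S @ [c]) s t = u"
    unfolding u_def using st(1) assms(3) by (rule substr_append)
  then have new: "occ (S @ [c]) u = 1" "2 \<le> occ (S @ [c]) (tl u)" "2 \<le> occ (S @ [c]) (butlast u)"
    using assms(2) by (simp_all add: mem_mus_iff)
  have "1 \<le> occ S u"
    unfolding u_def using substr_in_occs[OF st assms(3)] by (rule one_le_occ)
  then have "occ S u = 1"
    using new(1) occ_le_occ_snoc[of S u c] by simp
  then have "occ S (tl u) < 2 \<or> occ S (butlast u) < 2"
    using assms(2,3) st unfolding u_def by (auto simp: mem_mus_iff)
  moreover have "occ S u \<le> occ S (tl u)" "occ S u \<le> occ S (butlast u)"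
    by (simp_all add: occ_sublist_le)
  ultimately obtain w where w: "w = tl u \<or> w = butlast u" "occ S w = 1"
    using \<open>occ S u = 1\<close> by fastforce
  then have "suffix w (S @ [c])"
    using new by (auto simp: occ_snoc split: if_splits)
  have "length w \<noteq> 0"
    using w(2) assms(1) by (auto simp: occ_Nil)
  moreover have "length w = t - s"
    using w(1) st assms(3) unfolding u_def by (auto simp: length_substr)
  ultimately have "Suc s \<le> t"
    by linarith
  moreover have "tl u = substr S (Suc s) t" "butlast u = substr S s (t - 1)"
    unfolding u_def using st(1) assms(3) by (simp_all add: tl_substr butlast_substr)
  ultimately show ?thesis
    using w \<open>suffix w (S @ [c])\<close> by (auto simp del: suffix_snoc)
qed

lemma shortest_snoc_repeat_suffix_removed:
  assumes "S \<noteq> []" "suffix w (S @ [c])" "occs S w = {p}"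
    and shortest: "\<And>v. suffix v (S @ [c]) \<Longrightarrow> occ S v = 1 \<Longrightarrow> length w \<le> length v"
    and "2 \<le> occ (S @ [c]) (butlast w)"
  shows "(Suc p, p + length w) \<in> mus S - mus (S @ [c])"
proof -
  have "occ S w = 1"
    using assms(3) occ_eq_1_iff by blast
  then have "w \<noteq> []"
    using assms(1) by (auto simp: occ_Nil)
  then have shorter: "length (tl w) < length w" "length (butlast w) < length w"
    by simp_all
  have "2 \<le> occ S (tl w)"
  proof (rule ccontr)
    assume "\<not> 2 \<le> occ S (tl w)"
    moreover have "occ S w \<le> occ S (tl w)"
      by (simp add: occ_sublist_le)
    ultimately have "occ S (tl w) = 1"
      using \<open>occ S w = 1\<close> by simp
    moreover have "suffix (tl w) (S @ [c])"
      using assms(2) suffix_tl suffix_order.order_trans by blast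
    ultimately have "length w \<le> length (tl w)"
      using shortest by blast
    with shorter show False
      by linarith
  qed
  moreover have "2 \<le> occ S (butlast w)"
  proof (rule ccontr)
    assume "\<not> 2 \<le> occ S (butlast w)"
    moreover have "occ S w \<le> occ S (butlast w)"
      by (simp add: occ_sublist_le)
    ultimately have "occ S (butlast w) = 1"
      using \<open>occ S w = 1\<close> by simp
    moreover from this assms(5) have "suffix (butlast w) (S @ [c])"
      by (simp add: occ_snoc split: if_splits)
    ultimately have "length w \<le> length (butlast w)"
      using shortest by blast
    with shorter show False
      by linarith
  qed
  moreover have "p + length w \<le> length S" "substr S (Suc p) (p + length w) = w"
    using assms(3) by (auto simp: occs_def substr_at_occs)
  ultimately show ?thesis
    using \<open>occ S w = 1\<close> \<open>w \<noteq> []\<close> assms(2) unfolding mus_snoc_removed_iff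
    by (simp add: mem_mus_iff Suc_le_eq del: suffix_snoc)
qed

lemma mus_snoc_removed_nonempty:
  assumes "S \<noteq> []" "(s, t) \<in> mus (S @ [c])" "t \<le> length S"
    and "suffix (substr S (Suc s) t) (S @ [c])" "occ S (substr S (Suc s) t) = 1"
  shows "mus S - mus (S @ [c]) \<noteq> {}"
proof -
  define u where "u = substr S s t"
  have "1 \<le> s"
    using assms(2) by (simp add: mem_mus_iff)
  then have tl_u: "tl u = substr S (Suc s) t"
    unfolding u_def by (rule tl_substr)
  have "substr (S @ [c]) s t = u"
    unfolding u_def using \<open>1 \<le> s\<close> assms(3) by (rule substr_append)
  then have butlast_u: "2 \<le> occ (S @ [c]) (butlast u)"
    using assms(2) by (simp add: mem_mus_iff)
  txt \<open>The shortest suffix of S @ [c] occurring once in S is a suffix of the string of (s, t),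
    whose butlast repeats; so the shortest one is a lost MUS.\<close>
  obtain w where w: "suffix w (S @ [c])" "occ S w = 1"
    and shortest: "\<And>v. suffix v (S @ [c]) \<Longrightarrow> occ S v = 1 \<Longrightarrow> length w \<le> length v"
    using ex_has_least_nat[of "\<lambda>w. suffix w (S @ [c]) \<and> occ S w = 1" "tl u" length] assms(4,5) tl_u
    by metis
  obtain p where p: "occs S w = {p}"
    using w(2) occ_eq_1_iff by metis
  have "suffix w (tl u)"
    using suffix_length_suffix[of w "S @ [c]" "tl u"] w shortest[of "tl u"] assms(4,5) tl_u by simp
  then have "suffix w u"
    using suffix_tl suffix_order.order_trans by blast
  moreover have "w \<noteq> []"
    using w(2) assms(1) by (auto simp: occ_Nil)
  ultimately have "sublist (butlast w) (butlast u)"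
    by (auto simp: suffix_def butlast_append)
  then have "2 \<le> occ (S @ [c]) (butlast w)"
    using butlast_u occ_sublist_le order_trans by blast
  then show ?thesis
    using shortest_snoc_repeat_suffix_removed[OF assms(1) w(1) p shortest] by blast
qed

lemma mus_snoc_added_end:
  assumes "S \<noteq> []" "(s, t) \<in> mus (S @ [c]) - mus S"
  shows "t = Suc (length S) \<or> t \<in> Suc ` snoc_repeat_ends S c
    \<or> t \<in> snoc_repeat_ends S c \<and> mus S - mus (S @ [c]) \<noteq> {}"
proof (cases "t \<le> length S")
  case False
  then show ?thesis
    using assms(2) by (simp add: mem_mus_iff)
next
  case True
  have "1 \<le> s"
    using assms(2) by (simp add: mem_mus_iff)
  from mus_snoc_added_cases[OF assms True]
  consider "Suc s \<le> t" "suffix (substr S (Suc s) t) (S @ [c])" "occ S (substr S (Suc s) t) = 1"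
    | "Suc s \<le> t" "suffix (substr S s (t - 1)) (S @ [c])" "occ S (substr S s (t - 1)) = 1"
    by blast
  then show ?thesis
  proof cases
    case 1
    then have "t \<in> snoc_repeat_ends S c"
      using True by (intro mem_snoc_repeat_ends) simp_all
    moreover have "mus S - mus (S @ [c]) \<noteq> {}"
      using mus_snoc_removed_nonempty[OF assms(1) _ True 1(2,3)] assms(2) by blast
    ultimately show ?thesis
      by simp
  next
    case 2
    then have "t - 1 \<in> snoc_repeat_ends S c"
      using True \<open>1 \<le> s\<close> by (intro mem_snoc_repeat_ends) simp_all
    moreover have "t = Suc (t - 1)"
      using 2(1) by simp
    ultimately show ?thesis
      by blast
  qed
qed

lemma card_mus_snoc_added:
  assumes "S \<noteq> []"
  shows "card (mus (S @ [c]) - mus S) \<le> 3"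
    and "mus S \<subseteq> mus (S @ [c]) \<Longrightarrow> card (mus (S @ [c]) - mus S) \<le> 2"
proof -
  define D where "D = snoc_repeat_ends S c"
  define D' where "D' = (if mus S \<subseteq> mus (S @ [c]) then {} else D)"
  define F where "F = insert (Suc (length S)) (D' \<union> Suc ` D)"
  have "snd x \<in> F" if "x \<in> mus (S @ [c]) - mus S" for x
    using mus_snoc_added_end[OF assms, of "fst x" "snd x"] that unfolding F_def D'_def D_def by auto
  then have "mus (S @ [c]) - mus S \<subseteq> {x \<in> mus (S @ [c]). snd x \<in> F}"
    by blast
  moreover have "finite {x \<in> mus (S @ [c]). snd x \<in> F}"
    using finite_mus[of "S @ [c]"] by (rule finite_subset[rotated]) blast
  ultimately have "card (mus (S @ [c]) - mus S) \<le> card {x \<in> mus (S @ [c]). snd x \<in> F}"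
    by (rule card_mono[rotated])
  also have "\<dots> \<le> card F"
    unfolding F_def D'_def D_def by (rule card_mus_ends_le) (simp add: finite_snoc_repeat_ends)
  also have "\<dots> \<le> Suc (card (D' \<union> Suc ` D))"
    using finite_snoc_repeat_ends[of S c] unfolding F_def D'_def D_def by (simp add: card_insert_if)
  also have "\<dots> \<le> Suc (card D' + card (Suc ` D))"
    using card_Un_le by simp
  also have "card (Suc ` D) \<le> 1"
    using card_image_le[OF finite_snoc_repeat_ends] card_snoc_repeat_ends
    unfolding D_def by (metis order_trans)
  finally have bound: "card (mus (S @ [c]) - mus S) \<le> card D' + 2"
    by simp
  then show "card (mus (S @ [c]) - mus S) \<le> 3"
    using card_snoc_repeat_ends[of S c] unfolding D'_def D_def by (simp split: if_splits)
  show "card (mus (S @ [c]) - mus S) \<le> 2" if "mus S \<subseteq> mus (S @ [c])"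
    using bound that unfolding D'_def by simp
qed

lemma card_symdiff: "finite A \<Longrightarrow> finite B \<Longrightarrow> card (symdiff A B) = card (A - B) + card (B - A)"
  unfolding symdiff_def by (rule card_Un_disjoint) auto

lemma int_card_diff:
  "finite A \<Longrightarrow> finite B \<Longrightarrow> int (card A) - int (card B) = int (card (A - B)) - int (card (B - A))"
  using card_Int_Diff[of A B] card_Int_Diff[of B A] by (simp add: Int_commute)

theorem mus_snoc_bounds:
  assumes "S \<noteq> []"
  shows "card (symdiff (mus (S @ [c])) (mus S)) \<le> 4"
    and "-1 \<le> int (card (mus (S @ [c]))) - int (card (mus S))"
    and "int (card (mus (S @ [c]))) - int (card (mus S)) \<le> 2"
proof -
  have removed: "card (mus S - mus (S @ [c])) \<le> 1"
    by (rule card_mus_snoc_removed)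
  have added: "card (mus (S @ [c]) - mus S) \<le> 3"
    "card (mus S - mus (S @ [c])) = 0 \<Longrightarrow> card (mus (S @ [c]) - mus S) \<le> 2"
    using card_mus_snoc_added[OF assms] by (auto simp: card_0_eq finite_mus)
  show "card (symdiff (mus (S @ [c])) (mus S)) \<le> 4"
    using removed added by (simp add: card_symdiff finite_mus)
  have "int (card (mus (S @ [c]))) - int (card (mus S))
      = int (card (mus (S @ [c]) - mus S)) - int (card (mus S - mus (S @ [c])))"
    by (rule int_card_diff[OF finite_mus finite_mus])
  then show "-1 \<le> int (card (mus (S @ [c]))) - int (card (mus S))"
    "int (card (mus (S @ [c]))) - int (card (mus S)) \<le> 2"
    using removed added by linarith+
qed

section \<open>Windows of a text\<close>

lemma MUS_eq_image_mus:
  assumes "1 \<le> i" "j \<le> length T"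
  shows "MUS T i j = (\<lambda>(s, t). (s + (i - 1), t + (i - 1))) ` mus (substr T i j)"
proof -
  define W where "W = substr T i j"
  have len: "length W = Suc j - i"
    unfolding W_def using assms by (simp add: length_substr)
  have shifted: "(s + (i - 1), t + (i - 1)) \<in> MUS T i j \<longleftrightarrow> (s, t) \<in> mus W" for s t
  proof (cases "1 \<le> s \<and> t + (i - 1) \<le> j")
    case True
    have shift_back: "s + (i - 1) + 1 - i = s" "t + (i - 1) + 1 - i = t"
      using assms(1) by simp_all
    have "i \<le> s + (i - 1)" "t + (i - 1) \<le> j"
      using True by linarith+
    from substr_substr[OF assms(1) this, of T]
    have "substr T (s + (i - 1)) (t + (i - 1)) = substr W s t"
      unfolding W_def shift_back by simp
    then show ?thesis
      unfolding MUS_def mus_def substr_whole W_def[symmetric] using True len assms(1) by auto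
  next
    case False
    then show ?thesis
      unfolding MUS_def mus_def using len assms(1) by auto
  qed
  show ?thesis
    unfolding W_def[symmetric]
  proof (intro set_eqI iffI)
    fix x assume x: "x \<in> MUS T i j"
    then obtain s t where st: "x = (s, t)" "i \<le> s" "s \<le> t"
      unfolding MUS_def by blast
    then have "x = (\<lambda>(s, t). (s + (i - 1), t + (i - 1))) (s - (i - 1), t - (i - 1))"
      using assms(1) by auto
    moreover have "(s - (i - 1), t - (i - 1)) \<in> mus W"
      using shifted[of "s - (i - 1)" "t - (i - 1)"] x st assms(1) by simp
    ultimately show "x \<in> (\<lambda>(s, t). (s + (i - 1), t + (i - 1))) ` mus W"
      by blast
  next
    fix x assume "x \<in> (\<lambda>(s, t). (s + (i - 1), t + (i - 1))) ` mus W"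
    then show "x \<in> MUS T i j"
      using shifted by force
  qed
qed

lemma symdiff_image: "inj f \<Longrightarrow> symdiff (f ` A) (f ` B) = f ` symdiff A B"
  unfolding symdiff_def by (simp add: image_Un image_set_diff)

lemma MUS_snoc_counts:
  assumes "1 \<le> i" "i \<le> j" "j < length T"
  defines "S \<equiv> substr T i j"
  shows "card (symdiff (MUS T i (j + 1)) (MUS T i j)) = card (symdiff (mus (S @ [T ! j])) (mus S))"
    and "int (card (MUS T i (j + 1))) - int (card (MUS T i j))
           = int (card (mus (S @ [T ! j]))) - int (card (mus S))"
proof -
  define f :: "nat \<times> nat \<Rightarrow> nat \<times> nat" where "f = (\<lambda>(s, t). (s + (i - 1), t + (i - 1)))"
  have "inj f"
    unfolding f_def by (auto simp: inj_def)
  have "MUS T i j = f ` mus S" "MUS T i (j + 1) = f ` mus (S @ [T ! j])"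
    using MUS_eq_image_mus[of i j T] MUS_eq_image_mus[of i "j + 1" T] substr_snoc[of i j T] assms
    unfolding f_def by simp_all
  with \<open>inj f\<close> show "card (symdiff (MUS T i (j + 1)) (MUS T i j)) = card (symdiff (mus (S @ [T ! j])) (mus S))"
    and "int (card (MUS T i (j + 1))) - int (card (MUS T i j))
           = int (card (mus (S @ [T ! j]))) - int (card (mus S))"
    by (simp_all add: symdiff_image card_image inj_on_subset)
qed

lemma MUS_snoc_bounds:
  assumes "1 \<le> i" "i \<le> j" "j < length T"
  shows "card (symdiff (MUS T i (j + 1)) (MUS T i j)) \<le> 4"
    and "-1 \<le> int (card (MUS T i (j + 1))) - int (card (MUS T i j))"
    and "int (card (MUS T i (j + 1))) - int (card (MUS T i j)) \<le> 2"
proof -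
  have "substr T i j \<noteq> []"
    using assms length_substr[of i j T] by auto
  then show "card (symdiff (MUS T i (j + 1)) (MUS T i j)) \<le> 4"
    and "-1 \<le> int (card (MUS T i (j + 1))) - int (card (MUS T i j))"
    and "int (card (MUS T i (j + 1))) - int (card (MUS T i j)) \<le> 2"
    unfolding MUS_snoc_counts[OF assms] by (rule mus_snoc_bounds)+
qed

lemma exists_MUS_snoc_counts:
  assumes "1 \<le> i" "i \<le> j" "j < n" "length S = Suc j - i" "set S \<subseteq> \<Sigma>" "d \<in> \<Sigma>"
  shows "\<exists>T. length T = n \<and> set T \<subseteq> \<Sigma>
    \<and> card (symdiff (MUS T i (j + 1)) (MUS T i j)) = card (symdiff (mus (S @ [d])) (mus S))
    \<and> int (card (MUS T i (j + 1))) - int (card (MUS T i j)) = int (card (mus (S @ [d]))) - int (card (mus S))"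
proof -
  define T where "T = replicate (i - 1) d @ S @ d # replicate (n - Suc j) d"
  have "length T = n" "set T \<subseteq> \<Sigma>"
    using assms unfolding T_def by auto
  moreover have window: "drop (i - 1) T = S @ d # replicate (n - Suc j) d"
    unfolding T_def by simp
  then have "substr T i j = S"
    using assms by (simp add: substr_def)
  moreover have "T ! j = drop (i - 1) T ! length S"
    using assms \<open>length T = n\<close> by (simp add: nth_drop)
  then have "T ! j = d"
    unfolding window by simp
  ultimately show ?thesis
    using MUS_snoc_counts[of i j T] assms by auto
qed

section \<open>Extensions attaining the bounds\<close>

context
  fixes a b c :: 'a and k :: nat
  assumes distinct: "a \<noteq> b" "a \<noteq> c" "b \<noteq> c" and k: "2 \<le> k"
begin

lemma nth_gain_word:
  "p < k + 4 \<Longrightarrow>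
    (replicate k a @ [b, c, c, b]) ! p = (if p < k then a else if p = k \<or> p = k + 3 then b else c)"
  by (auto simp: nth_append numeral_eq_Suc less_Suc_eq)

lemma nth_gain_prefix:
  "p < k + 3 \<Longrightarrow> (replicate k a @ [b, c, c]) ! p = (if p < k then a else if p = k then b else c)"
  by (auto simp: nth_append numeral_eq_Suc less_Suc_eq)

lemma gain_word_occs:
  "occ (replicate k a @ [b, c, c, b]) [a, b] = 1"
  "occ (replicate k a @ [b, c, c, b]) [b, c] = 1"
  "occ (replicate k a @ [b, c, c, b]) [c, b] = 1"
  "2 \<le> occ (replicate k a @ [b, c, c, b]) [a]"
  "2 \<le> occ (replicate k a @ [b, c, c, b]) [b]"
  "2 \<le> occ (replicate k a @ [b, c, c, b]) [c]"
  "occ (replicate k a @ [b, c, c]) [b] = 1"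
proof -
  show "occ (replicate k a @ [b, c, c, b]) [a, b] = 1"
    by (rule occ_eq_1I[of "k - 1"])
      (use k distinct in \<open>auto simp: occs_pair nth_gain_word split: if_splits\<close>)
  show "occ (replicate k a @ [b, c, c, b]) [b, c] = 1"
    by (rule occ_eq_1I[of k])
      (use k distinct in \<open>auto simp: occs_pair nth_gain_word split: if_splits\<close>)
  show "occ (replicate k a @ [b, c, c, b]) [c, b] = 1"
    by (rule occ_eq_1I[of "k + 2"])
      (use k distinct in \<open>auto simp: occs_pair nth_gain_word split: if_splits\<close>)
  show "2 \<le> occ (replicate k a @ [b, c, c, b]) [a]"
    by (rule two_le_occ[of 0 _ _ 1]) (use k in \<open>auto simp: occs_singleton nth_gain_word\<close>)
  show "2 \<le> occ (replicate k a @ [b, c, c, b]) [b]"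
    by (rule two_le_occ[of k _ _ "k + 3"]) (auto simp: occs_singleton nth_gain_word)
  show "2 \<le> occ (replicate k a @ [b, c, c, b]) [c]"
    by (rule two_le_occ[of "k + 1" _ _ "k + 2"]) (auto simp: occs_singleton nth_gain_word)
  show "occ (replicate k a @ [b, c, c]) [b] = 1"
    by (rule occ_eq_1I[of k])
      (use distinct in \<open>auto simp: occs_singleton nth_gain_prefix split: if_splits\<close>)
qed

lemma gain_word_new_mus:
  "{(k, k + 1), (k + 1, k + 2), (k + 3, k + 4)}
     \<subseteq> mus ((replicate k a @ [b, c, c]) @ [b]) - mus (replicate k a @ [b, c, c])"
  using k gain_word_occs by (auto simp: mem_mus_iff substr_def numeral_eq_Suc)

lemma gain_word_counts:
  "card (mus ((replicate k a @ [b, c, c]) @ [b]) - mus (replicate k a @ [b, c, c])) = 3"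
  "card (mus (replicate k a @ [b, c, c]) - mus ((replicate k a @ [b, c, c]) @ [b])) = 1"
proof -
  let ?S = "replicate k a @ [b, c, c]"
  have "card {(k, k + 1), (k + 1, k + 2), (k + 3, k + 4)} = 3"
    by simp
  then have "3 \<le> card (mus (?S @ [b]) - mus ?S)"
    using card_mono[OF finite_Diff[OF finite_mus] gain_word_new_mus] by simp
  then show added: "card (mus (?S @ [b]) - mus ?S) = 3"
    using card_mus_snoc_added(1)[of ?S b] by simp
  txt \<open>Three new MUSs are one more than an extension that loses nothing can gain.\<close>
  then have "mus ?S - mus (?S @ [b]) \<noteq> {}"
    using card_mus_snoc_added(2)[of ?S b] by auto
  then have "card (mus ?S - mus (?S @ [b])) \<noteq> 0"
    by (simp add: finite_mus)
  then show "card (mus ?S - mus (?S @ [b])) = 1"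
    using card_mus_snoc_removed[of ?S b] by simp
qed

end

context
  fixes a b :: 'a and k :: nat
  assumes distinct: "a \<noteq> b" and k: "2 \<le> k"
begin

(* Keep simp from stripping the leading a's, so that nth_loss_word applies. *)
declare nth_Cons_Suc [simp del] nth_Cons_pos [simp del] nth_Cons_numeral [simp del]

lemma nth_loss_word:
  assumes "p < k + 4"
  shows "(a # a # replicate k b @ [a, a]) ! p = (if 2 \<le> p \<and> p < k + 2 then b else a)"
    and "p < k + 3 \<Longrightarrow> (a # a # replicate k b @ [a]) ! p = (if 2 \<le> p \<and> p < k + 2 then b else a)"
proof -
  consider "p = 0" | "p = 1" | q where "p = Suc (Suc q)"
    by (metis One_nat_def not0_implies_Suc)
  then show "(a # a # replicate k b @ [a, a]) ! p = (if 2 \<le> p \<and> p < k + 2 then b else a)"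
    and "p < k + 3 \<Longrightarrow> (a # a # replicate k b @ [a]) ! p = (if 2 \<le> p \<and> p < k + 2 then b else a)"
    using assms by (cases; auto simp: nth_append nth_Cons' less_Suc_eq)+
qed

lemma loss_word_occs:
  "2 \<le> occ (a # a # replicate k b @ [a, a]) [a, a]"
  "occ (a # a # replicate k b @ [a]) [a, a] = 1"
  "2 \<le> occ (a # a # replicate k b @ [a]) [a]"
  "2 \<le> occ (a # a # replicate k b @ [a]) [b]"
  "2 \<le> occ (a # a # replicate k b @ [a]) (replicate (k - 1) b)"
  "occ (a # a # replicate k b @ [a, a]) [a, b] = 1"
  "occ (a # a # replicate k b @ [a, a]) [b, a] = 1"
  "occ (a # a # replicate k b @ [a, a]) (replicate k b) = 1"
proof -
  show "2 \<le> occ (a # a # replicate k b @ [a, a]) [a, a]"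
    by (rule two_le_occ[of 0 _ _ "k + 2"]) (auto simp: occs_pair nth_loss_word)
  show "occ (a # a # replicate k b @ [a]) [a, a] = 1"
    by (rule occ_eq_1I[of 0])
      (use k distinct in \<open>auto simp: occs_pair nth_loss_word split: if_splits\<close>)
  show "2 \<le> occ (a # a # replicate k b @ [a]) [a]"
    by (rule two_le_occ[of 0 _ _ 1]) (auto simp: occs_singleton nth_loss_word)
  show "2 \<le> occ (a # a # replicate k b @ [a]) [b]"
    by (rule two_le_occ[of 2 _ _ 3]) (use k in \<open>auto simp: occs_singleton nth_loss_word\<close>)
  show "2 \<le> occ (a # a # replicate k b @ [a]) (replicate (k - 1) b)"
    by (rule two_le_occ[of 2 _ _ 3]) (use k in \<open>auto simp: occs_nth nth_loss_word\<close>)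
  show "occ (a # a # replicate k b @ [a, a]) [a, b] = 1"
    by (rule occ_eq_1I[of 1])
      (use k distinct in \<open>auto simp: occs_pair nth_loss_word split: if_splits\<close>)
  show "occ (a # a # replicate k b @ [a, a]) [b, a] = 1"
    by (rule occ_eq_1I[of "k + 1"])
      (use k distinct in \<open>auto simp: occs_pair nth_loss_word split: if_splits\<close>)
  show "occ (a # a # replicate k b @ [a, a]) (replicate k b) = 1"
  proof (rule occ_eq_1I[of 2])
    show "2 \<in> occs (a # a # replicate k b @ [a, a]) (replicate k b)"
      by (auto simp: occs_nth nth_loss_word)
  next
    fix q assume "q \<in> occs (a # a # replicate k b @ [a, a]) (replicate k b)"
    then have len: "q + k \<le> k + 4"
      and block: "\<forall>r < k. (a # a # replicate k b @ [a, a]) ! (q + r) = b"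
      by (simp_all add: occs_nth)
    have "(a # a # replicate k b @ [a, a]) ! (q + 0) = b"
      "(a # a # replicate k b @ [a, a]) ! (q + (k - 1)) = b"
      by (rule block[rule_format]; use k in simp)+
    moreover have "q + 0 < k + 4" "q + (k - 1) < k + 4"
      using len k by linarith+
    ultimately have "2 \<le> q + 0" "q + (k - 1) < k + 2"
      using nth_loss_word(1) distinct by (auto split: if_splits)
    then show "q = 2"
      using k by linarith
  qed
qed

lemma loss_word_substrs:
  "substr (a # a # replicate k b @ [a, a]) 1 2 = [a, a]"
  "substr (a # a # replicate k b @ [a, a]) (k + 3) (k + 4) = [a, a]"
  "substr (a # a # replicate k b @ [a, a]) 3 (k + 1) = replicate (k - 1) b"
  "substr (a # a # replicate k b @ [a, a]) 4 (k + 2) = replicate (k - 1) b"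
  "substr (a # a # replicate k b @ [a, a]) 2 3 = [a, b]"
  "substr (a # a # replicate k b @ [a, a]) 3 (k + 2) = replicate k b"
  "substr (a # a # replicate k b @ [a, a]) (k + 2) (k + 3) = [b, a]"
  using k by (simp_all add: substr_def numeral_eq_Suc drop_Cons' take_Cons')

lemma loss_word_mus_subset: "mus (a # a # replicate k b @ [a, a]) \<subseteq> {(2, 3), (3, k + 2), (k + 2, k + 3)}"
proof -
  let ?W = "a # a # replicate k b @ [a, a]"
  have "(s, t) \<in> {(2, 3), (3, k + 2), (k + 2, k + 3)}" if mus: "(s, t) \<in> mus ?W" for s t
  proof -
    txt \<open>Any other interval lies within a repeating aa or b^(k-1), or contains a unique
      ab, b^k or ba.\<close>
    from mus have st: "1 \<le> s" "occ ?W (substr ?W s t) = 1"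
      by (simp_all add: mem_mus_iff)
    have outside: "\<not> (p \<le> s \<and> t \<le> q)" if "1 \<le> p" "2 \<le> occ ?W (substr ?W p q)" for p q
      using occ_substr_le[of p s t q ?W] st that by auto
    have contained: "s \<le> p \<and> q \<le> t \<longrightarrow> p = s \<and> q = t" if "occ ?W (substr ?W p q) = 1" for p q
      using mus_nested_eq[OF mus] that by blast
    have "2 \<le> occ ?W (replicate (k - 1) b)"
      using loss_word_occs(5) occ_le_occ_snoc[of "a # a # replicate k b @ [a]" _ a] order_trans by fastforce
    then have "\<not> (1 \<le> s \<and> t \<le> 2)" "\<not> (k + 3 \<le> s \<and> t \<le> k + 4)"
      "\<not> (3 \<le> s \<and> t \<le> k + 1)" "\<not> (4 \<le> s \<and> t \<le> k + 2)"
      using outside[of 1 2] outside[of "k + 3" "k + 4"] outside[of 3 "k + 1"] outside[of 4 "k + 2"]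
        loss_word_substrs(1-4) loss_word_occs(1) by simp_all
    moreover have "s \<le> 2 \<and> 3 \<le> t \<longrightarrow> 2 = s \<and> 3 = t"
      "s \<le> 3 \<and> k + 2 \<le> t \<longrightarrow> 3 = s \<and> k + 2 = t"
      "s \<le> k + 2 \<and> k + 3 \<le> t \<longrightarrow> k + 2 = s \<and> k + 3 = t"
      using contained[of 2 3] contained[of 3 "k + 2"] contained[of "k + 2" "k + 3"]
        loss_word_substrs(5-7) loss_word_occs(6-8) by simp_all
    moreover have "t \<le> k + 4"
      using mus by (simp add: mem_mus_iff)
    ultimately show ?thesis
      using st(1) by (auto simp: not_le)
  qed
  then show ?thesis
    by auto
qed

lemma loss_word_old_mus:
  "{(1, 2), (2, 3), (3, k + 2), (k + 2, k + 3)} \<subseteq> mus (a # a # replicate k b @ [a])"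
proof -
  let ?V = "a # a # replicate k b @ [a]"
  have substrs: "substr ?V 1 2 = [a, a]" "substr ?V 2 3 = [a, b]"
    "substr ?V 3 (k + 2) = replicate k b" "substr ?V (k + 2) (k + 3) = [b, a]"
    using loss_word_substrs(1,5-7) substr_append[of _ _ ?V "[a]"] by simp_all
  have unique: "occ ?V w = 1" if "occ (?V @ [a]) w = 1" "p \<in> occs ?V w" for w p
    using that occ_le_occ_snoc[of ?V w a] one_le_occ[of p ?V w] by simp
  have "occ ?V [a, b] = 1" "occ ?V [b, a] = 1" "occ ?V (replicate k b) = 1"
    using unique[of "[a, b]" 1] unique[of "[b, a]" "k + 1"] unique[of "replicate k b" 2]
      substr_in_occs[of 2 3 ?V] substr_in_occs[of "k + 2" "k + 3" ?V] substr_in_occs[of 3 "k + 2" ?V]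
      loss_word_occs(6-8) substrs k by simp_all
  then show ?thesis
    using substrs loss_word_occs(2-5) k by (auto simp: mem_mus_iff butlast_conv_take)
qed

lemma loss_word_counts:
  "card (mus ((a # a # replicate k b @ [a]) @ [a]) - mus (a # a # replicate k b @ [a])) = 0"
  "card (mus (a # a # replicate k b @ [a]) - mus ((a # a # replicate k b @ [a]) @ [a])) = 1"
proof -
  let ?V = "a # a # replicate k b @ [a]"
  have "mus (?V @ [a]) - mus ?V = {}"
    using loss_word_mus_subset loss_word_old_mus by auto
  then show "card (mus (?V @ [a]) - mus ?V) = 0"
    by (simp only: card.empty)
  have "(1, 2) \<notin> mus (?V @ [a])"
    using loss_word_mus_subset by auto
  then have "(1, 2) \<in> mus ?V - mus (?V @ [a])"
    using loss_word_old_mus by auto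
  then have "card (mus ?V - mus (?V @ [a])) \<noteq> 0"
    by (auto simp: finite_mus)
  then show "card (mus ?V - mus (?V @ [a])) = 1"
    using card_mus_snoc_removed[of ?V a] by simp
qed

end

lemma MUS_snoc_bounds_attained:
  assumes "finite \<Sigma>" "3 \<le> card \<Sigma>" "1 \<le> i" "i \<le> j" "j < n" "5 \<le> j - i + 1"
  shows "\<exists>T. length T = n \<and> set T \<subseteq> \<Sigma> \<and> card (symdiff (MUS T i (j + 1)) (MUS T i j)) = 4"
    and "\<exists>T. length T = n \<and> set T \<subseteq> \<Sigma> \<and> int (card (MUS T i (j + 1))) - int (card (MUS T i j)) = 2"
    and "\<exists>T. length T = n \<and> set T \<subseteq> \<Sigma> \<and> int (card (MUS T i (j + 1))) - int (card (MUS T i j)) = -1"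
proof -
  obtain A where "A \<subseteq> \<Sigma>" "card A = 3"
    using assms(1,2) obtain_subset_with_card_n by metis
  then obtain a b c where abc: "a \<in> \<Sigma>" "b \<in> \<Sigma>" "c \<in> \<Sigma>" "a \<noteq> b" "a \<noteq> c" "b \<noteq> c"
    by (auto simp: card_3_iff)
  define k where "k = j - i - 2"
  have k: "2 \<le> k" "Suc j - i = k + 3"
    using assms(6) unfolding k_def by auto
  let ?gain = "replicate k a @ [b, c, c]" and ?loss = "a # a # replicate k b @ [a]"
  obtain T where "length T = n" "set T \<subseteq> \<Sigma>"
    "card (symdiff (MUS T i (j + 1)) (MUS T i j)) = card (symdiff (mus (?gain @ [b])) (mus ?gain))"
    "int (card (MUS T i (j + 1))) - int (card (MUS T i j)) = int (card (mus (?gain @ [b]))) - int (card (mus ?gain))"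
    using exists_MUS_snoc_counts[of i j n ?gain \<Sigma> b] assms abc k by auto
  moreover note gain_word_counts[OF abc(4-6) k(1)]
  ultimately show "\<exists>T. length T = n \<and> set T \<subseteq> \<Sigma> \<and> card (symdiff (MUS T i (j + 1)) (MUS T i j)) = 4"
    and "\<exists>T. length T = n \<and> set T \<subseteq> \<Sigma> \<and> int (card (MUS T i (j + 1))) - int (card (MUS T i j)) = 2"
    by (auto simp: card_symdiff int_card_diff[OF finite_mus finite_mus] finite_mus)
  obtain T where "length T = n" "set T \<subseteq> \<Sigma>"
    "int (card (MUS T i (j + 1))) - int (card (MUS T i j)) = int (card (mus (?loss @ [a]))) - int (card (mus ?loss))"
    using exists_MUS_snoc_counts[of i j n ?loss \<Sigma> a] assms abc k by auto
  moreover note loss_word_counts[OF abc(4) k(1)]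
  ultimately show "\<exists>T. length T = n \<and> set T \<subseteq> \<Sigma> \<and> int (card (MUS T i (j + 1))) - int (card (MUS T i j)) = -1"
    by (auto simp: int_card_diff[OF finite_mus finite_mus])
qed

theorem theorem1:
  shows "(\<forall>(T :: 'a list) (\<Sigma> :: 'a set) i j.
            finite \<Sigma> \<and> card \<Sigma> \<ge> 2 \<and> set T \<subseteq> \<Sigma> \<and> 1 \<le> i \<and> i \<le> j \<and> j < length T \<longrightarrow>
              card (symdiff (MUS T i (j + 1)) (MUS T i j)) \<le> 4
            \<and> -1 \<le> int (card (MUS T i (j + 1))) - int (card (MUS T i j))
            \<and> int (card (MUS T i (j + 1))) - int (card (MUS T i j)) \<le> 2)
       \<and> (\<forall>(\<Sigma> :: 'a set) (n :: nat) i j.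
            finite \<Sigma> \<and> card \<Sigma> \<ge> 3 \<and> 1 \<le> i \<and> i \<le> j \<and> j < n \<and> j - i + 1 \<ge> 5 \<longrightarrow>
              (\<exists>T. length T = n \<and> set T \<subseteq> \<Sigma> \<and>
                   card (symdiff (MUS T i (j + 1)) (MUS T i j)) = 4)
            \<and> (\<exists>T. length T = n \<and> set T \<subseteq> \<Sigma> \<and>
                   int (card (MUS T i (j + 1))) - int (card (MUS T i j)) = 2)
            \<and> (\<exists>T. length T = n \<and> set T \<subseteq> \<Sigma> \<and>
                   int (card (MUS T i (j + 1))) - int (card (MUS T i j)) = -1))"
proof (intro conjI allI impI; elim conjE)
  show "card (symdiff (MUS T i (j + 1)) (MUS T i j)) \<le> 4"
    "-1 \<le> int (card (MUS T i (j + 1))) - int (card (MUS T i j))"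
    "int (card (MUS T i (j + 1))) - int (card (MUS T i j)) \<le> 2"
    if "1 \<le> i" "i \<le> j" "j < length T" for T :: "'a list" and i j
    using MUS_snoc_bounds[OF that] by simp_all
qed (rule MUS_snoc_bounds_attained; assumption)+

end
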